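(* Let $n\in\mathbb{N}$, let $\omega_1,\dots,\omega_n\in\mathbb{C}$, and let $r_k=|r_k|e^{i\phi_k}\in\mathbb{C}$ ($k\in[n]$) satisfy $\big|\sum_{k\in[n]}\omega_ke^{i\phi_k}\big|=1$. Then: (i) every $\omega_k$ can be written as a finite sum $\omega_k=\sum_{j\in[m_k]}e^{i\theta_{k,j}}$ with $\theta_{k,j}\in\mathbb{R}$; (ii) if for each $k$ there are two such representations $\omega_k=\sum_{j\in[m_k]}e^{i\theta_{k,j}}=\sum_{j\in[m'_k]}e^{i\theta'_{k,j}}$, and $a_{k,j}=r_ke^{i\theta_{k,j}}$, $a'_{k,j}=r_ke^{i\theta'_{k,j}}$, then for every $\alpha\in\mathbb{C}\setminus i\mathbb{R}$ $$\epsilon_\alpha^{-1}\Big(\sum_{(k,j)\in[n]\times[m_k]}\epsilon_\alpha(a_{k,j})\Big)=\epsilon_\alpha^{-1}\Big(\sum_{(k,j)\in[n]\times[m'_k]}\epsilon_\alpha(a'_{k,j})\Big),$$ and consequently the limits of these expressions as $|\alpha|\to0$, as $|\alpha|\to\infty$ with $\mathrm{Re}\,\alpha>0$, or as $|\alpha|\to\infty$ with $\mathrm{Re}\,\alpha<0$, along a fixed argument $\arg\alpha=\Theta$, also coincide. Hence the weighted generalized mean $M_\alpha((r_1,\omega_1),\dots,(r_n,\omega_n)):={}^{\alpha}\!\sum_{(k,j)}a_{k,j}$ (and its limiting versions: weighted geometric mean, maximum and minimum in direction $\Theta$) is independent of the chosen representations of the $\omega_k$.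
   Context: For $\alpha\in\mathbb{C}\setminus i\mathbb{R}$, $\epsilon_\alpha:\mathbb{C}\to\mathbb{C}$ is defined by $\epsilon_\alpha(0)=0$ and $\epsilon_\alpha(rs)=r^\alpha s=e^{\alpha\ln r}s$ for $r>0$, $|s|=1$; it is a bijective multiplicative map. ${}^{\alpha}\!\sum_ta_t:=\epsilon_\alpha^{-1}\big(\sum_t\epsilon_\alpha(a_t)\big)$. *)

theory Defs
  imports "HOL-Analysis.Analysis"
begin

text \<open>The map epsilon_alpha: eps(0) = 0 and eps(r s) = r powers alpha times s, i.e.
  exp(alpha ln r) s, for r > 0 and |s| = 1 (so r = |z| and s = z / |z|).\<close>
definition eps :: "complex \<Rightarrow> complex \<Rightarrow> complex" where
  "eps \<alpha> z = (if z = 0 then 0 else exp (\<alpha> * of_real (ln (cmod z))) * (z / of_real (cmod z)))"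

definition alpha_sum :: "complex \<Rightarrow> ('i \<Rightarrow> complex) \<Rightarrow> 'i set \<Rightarrow> complex" where
  "alpha_sum \<alpha> a A = inv (eps \<alpha>) (\<Sum>t\<in>A. eps \<alpha> (a t))"

end

theory Submission
  imports Defs
begin

text \<open>eps commutes with rotations, eps (z * cis t) = eps z * cis t, so the eps-image of
  the sum over all (k, j) collapses to \<Sum>k. eps (r k) * \<omega> k: it sees the representations of
  the \<omega> k only through the \<omega> k themselves. For existence, a number of modulus
  at most 2 is a sum of two unit vectors, and w is the sum of N + 1 copies of w / (N + 1)
  once N \<ge> |w|.\<close>

lemma eps_mult_cis: "eps \<alpha> (z * cis t) = eps \<alpha> z * cis t"
  by (simp add: eps_def norm_mult)

lemma sum_eps_Sigma_mult_cis:
  assumes "finite K" and "\<forall>k\<in>K. finite (J k)"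
  shows "(\<Sum>(k, j)\<in>Sigma K J. eps \<alpha> (r k * cis (\<theta> k j)))
       = (\<Sum>k\<in>K. eps \<alpha> (r k) * (\<Sum>j\<in>J k. cis (\<theta> k j)))"
  using assms by (simp add: sum.Sigma [symmetric] eps_mult_cis sum_distrib_left)

lemma alpha_sum_Sigma_mult_cis:
  assumes "finite K" and "\<forall>k\<in>K. finite (J k)"
  shows "alpha_sum \<alpha> (\<lambda>(k, j). r k * cis (\<theta> k j)) (Sigma K J)
       = inv (eps \<alpha>) (\<Sum>k\<in>K. eps \<alpha> (r k) * (\<Sum>j\<in>J k. cis (\<theta> k j)))"
  using sum_eps_Sigma_mult_cis [OF assms] by (simp add: alpha_sum_def case_prod_unfold)

lemma alpha_sum_Sigma_mult_cis_cong:
  assumes "finite K" and "\<forall>k\<in>K. finite (J k)" and "\<forall>k\<in>K. finite (J' k)"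
    and "\<And>k. k \<in> K \<Longrightarrow> (\<Sum>j\<in>J k. cis (\<theta> k j)) = (\<Sum>j\<in>J' k. cis (\<theta>' k j))"
  shows "alpha_sum \<alpha> (\<lambda>(k, j). r k * cis (\<theta> k j)) (Sigma K J)
       = alpha_sum \<alpha> (\<lambda>(k, j). r k * cis (\<theta>' k j)) (Sigma K J')"
  using assms by (simp add: alpha_sum_Sigma_mult_cis)

lemma ex_cis_add_eq:
  assumes "cmod z \<le> 2"
  obtains s t where "z = cis s + cis t"
proof
  define \<beta> where "\<beta> = arccos (cmod z / 2)"
  have "cos \<beta> = cmod z / 2"
    unfolding \<beta>_def using assms norm_ge_zero [of z] by (intro cos_arccos) linarith+
  then have "cis (Arg z + \<beta>) + cis (Arg z - \<beta>) = rcis (cmod z) (Arg z)"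
    by (simp add: rcis_def cis.ctr complex_eq_iff cos_add cos_diff sin_add sin_diff)
  then show "z = cis (Arg z + \<beta>) + cis (Arg z - \<beta>)"
    by (simp add: rcis_cmod_Arg)
qed

lemma ex_sum_cis_eq: "\<exists>(m::nat) (\<theta>::nat \<Rightarrow> real). w = (\<Sum>j<m. cis (\<theta> j))"
proof -
  define N where "N = nat \<lceil>cmod w\<rceil>"
  have "cmod w \<le> real (Suc N)"
    unfolding N_def by linarith
  then have "cmod (w / of_nat (Suc N)) \<le> 1"
    by (simp add: norm_divide divide_le_eq del: of_nat_Suc)
  then have "cmod (w / of_nat (Suc N)) \<le> 2"
    by linarith
  then obtain s t where st: "w / of_nat (Suc N) = cis s + cis t"
    by (rule ex_cis_add_eq)
  define \<theta> where "\<theta> = (\<lambda>j::nat. if even j then s else t)"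
  have "(\<Sum>j<Suc (Suc (2 * N)). cis (\<theta> j)) = (\<Sum>j\<le>Suc (2 * N). cis (\<theta> j))"
    by (simp only: lessThan_Suc_atMost)
  also have "\<dots> = (\<Sum>i\<le>N. cis s + cis t)"
    by (simp only: sum.in_pairs_0) (simp add: \<theta>_def)
  also have "\<dots> = w"
    by (simp add: st [symmetric] del: of_nat_Suc)
  finally show ?thesis
    by (intro exI [of _ "Suc (Suc (2 * N))"] exI [of _ \<theta>]) simp
qed

theorem mainTheorem7:
  fixes n :: nat and \<omega> r :: "nat \<Rightarrow> complex" and \<phi> :: "nat \<Rightarrow> real"
  assumes polar: "\<forall>k<n. r k = of_real (cmod (r k)) * cis (\<phi> k)"
    and norm1: "cmod (\<Sum>k<n. \<omega> k * cis (\<phi> k)) = 1"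
  shows "(\<forall>k<n. \<exists>(m::nat) (\<theta>::nat \<Rightarrow> real). \<omega> k = (\<Sum>j<m. cis (\<theta> j)))
    \<and> (\<forall>(m::nat \<Rightarrow> nat) (\<theta>::nat \<Rightarrow> nat \<Rightarrow> real) (m'::nat \<Rightarrow> nat) (\<theta>'::nat \<Rightarrow> nat \<Rightarrow> real).
        (\<forall>k<n. \<omega> k = (\<Sum>j<m k. cis (\<theta> k j)) \<and> \<omega> k = (\<Sum>j<m' k. cis (\<theta>' k j))) \<longrightarrow>
        ((\<forall>\<alpha>. Re \<alpha> \<noteq> 0 \<longrightarrow>
            alpha_sum \<alpha> (\<lambda>(k, j). r k * cis (\<theta> k j)) (SIGMA k:{..<n}. {..<m k})
          = alpha_sum \<alpha> (\<lambda>(k, j). r k * cis (\<theta>' k j)) (SIGMA k:{..<n}. {..<m' k}))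
        \<and> (\<forall>\<Theta> L. cos \<Theta> \<noteq> 0 \<longrightarrow>
            ((((\<lambda>t::real. alpha_sum (of_real t * cis \<Theta>) (\<lambda>(k, j). r k * cis (\<theta> k j)) (SIGMA k:{..<n}. {..<m k})) \<longlongrightarrow> L) (at_right 0)
              \<longleftrightarrow> ((\<lambda>t::real. alpha_sum (of_real t * cis \<Theta>) (\<lambda>(k, j). r k * cis (\<theta>' k j)) (SIGMA k:{..<n}. {..<m' k})) \<longlongrightarrow> L) (at_right 0))
            \<and> (((\<lambda>t::real. alpha_sum (of_real t * cis \<Theta>) (\<lambda>(k, j). r k * cis (\<theta> k j)) (SIGMA k:{..<n}. {..<m k})) \<longlongrightarrow> L) at_top
              \<longleftrightarrow> ((\<lambda>t::real. alpha_sum (of_real t * cis \<Theta>) (\<lambda>(k, j). r k * cis (\<theta>' k j)) (SIGMA k:{..<n}. {..<m' k})) \<longlongrightarrow> L) at_top)))))"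
proof (intro conjI allI impI)
  show "\<exists>(m::nat) (\<theta>::nat \<Rightarrow> real). \<omega> k = (\<Sum>j<m. cis (\<theta> j))" for k
    by (rule ex_sum_cis_eq)
qed (auto intro!: tendsto_cong always_eventually alpha_sum_Sigma_mult_cis_cong)

end
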